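(* Let $T$ be a triangle of type $(120^\circ,30^\circ,30^\circ)$. Then $h(n,T)\le\frac{4}{81}n^3$ for every positive integer $n$.
   Context: A triangle is of type $(\alpha,\beta,\gamma)$ if $\alpha\ge\beta\ge\gamma$ are its interior angles in degrees. For a triangle $T$ with side lengths $a,b,c$ and $\varepsilon>0$, with $\varepsilon'=\varepsilon\min\{a,b,c\}$, a triangle $A'B'C'$ is $\varepsilon$-congruent to $T$ if there are $A,B,C\in\mathbb{R}^2$ with $ABC$ congruent to $T$ and $A',B',C'$ within distance $\varepsilon'$ of $A,B,C$ respectively. $h(n,T,\varepsilon)$ is the maximum over $n$-point sets $P\subseteq\mathbb{R}^2$ of the number of 3-subsets of $P$ forming triangles $\varepsilon$-congruent to $T$, and $h(n,T)=\min_{\varepsilon>0}h(n,T,\varepsilon)$. *)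

theory Defs
  imports "HOL-Analysis.Analysis" "HOL-Library.Multiset"
begin

type_synonym point = "real^2"
type_synonym triangle = "point \<times> point \<times> point"

definition angle_deg :: "point \<Rightarrow> point \<Rightarrow> point \<Rightarrow> real" where
  "angle_deg A B C =
     arccos (((B - A) \<bullet> (C - A)) / (norm (B - A) * norm (C - A))) * 180 / pi"

definition tri_type :: "triangle \<Rightarrow> real \<Rightarrow> real \<Rightarrow> real \<Rightarrow> bool" where
  "tri_type T \<alpha> \<beta> \<gamma> \<longleftrightarrow>
     (case T of (A, B, C) \<Rightarrow>
        \<not> collinear {A, B, C} \<and> \<alpha> \<ge> \<beta> \<and> \<beta> \<ge> \<gamma> \<and>
        {# angle_deg A B C, angle_deg B C A, angle_deg C A B #} = {# \<alpha>, \<beta>, \<gamma> #})"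

definition congruent_to :: "point \<Rightarrow> point \<Rightarrow> point \<Rightarrow> triangle \<Rightarrow> bool" where
  "congruent_to A B C T \<longleftrightarrow>
     (case T of (A0, B0, C0) \<Rightarrow>
        dist A B = dist A0 B0 \<and> dist B C = dist B0 C0 \<and> dist C A = dist C0 A0)"

definition min_side :: "triangle \<Rightarrow> real" where
  "min_side T = (case T of (A0, B0, C0) \<Rightarrow> min (dist B0 C0) (min (dist C0 A0) (dist A0 B0)))"

definition eps_congruent :: "real \<Rightarrow> point \<Rightarrow> point \<Rightarrow> point \<Rightarrow> triangle \<Rightarrow> bool" where
  "eps_congruent \<epsilon> A' B' C' T \<longleftrightarrow>
     (\<exists>A B C. congruent_to A B C T \<and>
        dist A' A \<le> \<epsilon> * min_side T \<and> dist B' B \<le> \<epsilon> * min_side T \<and>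
        dist C' C \<le> \<epsilon> * min_side T)"

definition count_eps :: "triangle \<Rightarrow> real \<Rightarrow> point set \<Rightarrow> nat" where
  "count_eps T \<epsilon> P = card {S. S \<subseteq> P \<and> card S = 3 \<and>
      (\<exists>A' B' C'. S = {A', B', C'} \<and> eps_congruent \<epsilon> A' B' C' T)}"

definition h_eps :: "nat \<Rightarrow> triangle \<Rightarrow> real \<Rightarrow> nat" where
  "h_eps n T \<epsilon> = Max {count_eps T \<epsilon> P | P. finite P \<and> card P = n}"

definition h :: "nat \<Rightarrow> triangle \<Rightarrow> nat" where
  "h n T = Inf {h_eps n T \<epsilon> | \<epsilon>. \<epsilon> > 0}"

end

theory Submission
  imports Defs
begin

(* Scale T to side lengths 1, 1, sqrt 3 and fix a small eps.  The eps-congruent triples of P form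
   a 3-uniform hypergraph in which every edge has two sides close to 1 and one close to sqrt 3.
   Weight the points by 1 and apply Zykov symmetrization: two points in no common edge can be
   merged, giving one of them the other's weight, without decreasing the weighted edge count.
   When no such pair is left, all mutual distances are close to 1 or sqrt 3.  Three vectors in the
   plane have a vanishing Gram determinant; applied to the nominal distances this leaves at most
   four points and forbids four points carrying all four triples.  On such a configuration the
   weighted count is at most 4/81 (total weight)^3, the Lagrangian of K4 minus an edge. *)

section \<open>Lagrangians of 3-uniform hypergraphs\<close>

definition triples :: "('a set \<Rightarrow> bool) \<Rightarrow> 'a set \<Rightarrow> 'a set set" where
  "triples p Q = {S. S \<subseteq> Q \<and> card S = 3 \<and> p S}"

definition lagrangian_poly :: "('a set \<Rightarrow> bool) \<Rightarrow> 'a set \<Rightarrow> ('a \<Rightarrow> real) \<Rightarrow> real" where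
  "lagrangian_poly p Q w = (\<Sum>S\<in>triples p Q. \<Prod>x\<in>S. w x)"

definition link_poly :: "('a set \<Rightarrow> bool) \<Rightarrow> 'a set \<Rightarrow> 'a \<Rightarrow> ('a \<Rightarrow> real) \<Rightarrow> real" where
  "link_poly p Q x w = (\<Sum>S\<in>{S\<in>triples p Q. x \<in> S}. \<Prod>z\<in>S - {x}. w z)"

definition covers_pairs :: "('a set \<Rightarrow> bool) \<Rightarrow> 'a set \<Rightarrow> bool" where
  "covers_pairs p Q \<longleftrightarrow> (\<forall>x\<in>Q. \<forall>y\<in>Q. x \<noteq> y \<longrightarrow> (\<exists>S\<in>triples p Q. x \<in> S \<and> y \<in> S))"

lemma finite_triples: "finite Q \<Longrightarrow> finite (triples p Q)"
  unfolding triples_def by (rule finite_subset[of _ "Pow Q"]) auto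

lemma card_triples_eq_lagrangian_poly: "real (card (triples p Q)) = lagrangian_poly p Q (\<lambda>_. 1)"
  by (simp add: lagrangian_poly_def)

lemma lagrangian_poly_cong:
  "(\<And>z. z \<in> Q \<Longrightarrow> w z = w' z) \<Longrightarrow> lagrangian_poly p Q w = lagrangian_poly p Q w'"
  unfolding lagrangian_poly_def triples_def by (intro sum.cong prod.cong) auto

lemma link_poly_cong:
  "(\<And>z. z \<in> Q - {x} \<Longrightarrow> w z = w' z) \<Longrightarrow> link_poly p Q x w = link_poly p Q x w'"
  unfolding link_poly_def triples_def by (intro sum.cong prod.cong) auto

lemma link_poly_Diff_nonadjacent:
  assumes "\<forall>S\<in>triples p Q. \<not> (x \<in> S \<and> y \<in> S)"
  shows "link_poly p (Q - {x}) y w = link_poly p Q y w"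
proof -
  have "{S\<in>triples p (Q - {x}). y \<in> S} = {S\<in>triples p Q. y \<in> S}"
    using assms unfolding triples_def by blast
  then show ?thesis by (simp add: link_poly_def)
qed

lemma lagrangian_poly_remove:
  assumes "finite Q"
  shows "lagrangian_poly p Q w = lagrangian_poly p (Q - {x}) w + w x * link_poly p Q x w"
proof -
  have split: "triples p Q = triples p (Q - {x}) \<union> {S\<in>triples p Q. x \<in> S}"
    and disj: "triples p (Q - {x}) \<inter> {S\<in>triples p Q. x \<in> S} = {}"
    unfolding triples_def by auto
  have "(\<Prod>z\<in>S. w z) = w x * (\<Prod>z\<in>S - {x}. w z)" if "S \<in> triples p Q" "x \<in> S" for S
    using that assms by (intro prod.remove) (auto simp: triples_def finite_subset)
  then have "(\<Sum>S\<in>{S\<in>triples p Q. x \<in> S}. \<Prod>z\<in>S. w z) = w x * link_poly p Q x w"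
    by (simp add: link_poly_def sum_distrib_left)
  moreover have "finite (triples p Q)" "finite (triples p (Q - {x}))"
    using assms by (simp_all add: finite_triples)
  ultimately show ?thesis
    unfolding lagrangian_poly_def
    by (subst (1) split, subst sum.union_disjoint[OF _ _ disj]) auto
qed

(* Zykov symmetrization: no edge contains both x and y, so the polynomial is affine in w x and in
   w y with no w x * w y term, and moving all weight to the better of the two cannot lose. *)
lemma lagrangian_poly_merge_le:
  assumes "finite Q" "x \<noteq> y" and nonadj: "\<forall>S\<in>triples p Q. \<not> (x \<in> S \<and> y \<in> S)"
    and w_nonneg: "\<And>z. 0 \<le> w z"
  shows "lagrangian_poly p Q w \<le>
    max (lagrangian_poly p (Q - {y}) (w(x := w x + w y)))
        (lagrangian_poly p (Q - {x}) (w(y := w x + w y)))"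
proof -
  define Z where "Z = lagrangian_poly p (Q - {x} - {y}) w"
  define \<alpha> where "\<alpha> = link_poly p Q x w"
  define \<beta> where "\<beta> = link_poly p Q y w"
  have nonadj': "\<forall>S\<in>triples p Q. \<not> (y \<in> S \<and> x \<in> S)" using nonadj by blast
  have Qxy: "Q - {y} - {x} = Q - {x} - {y}" by blast
  have "lagrangian_poly p Q w = lagrangian_poly p (Q - {x}) w + w x * \<alpha>"
    unfolding \<alpha>_def using assms(1) by (rule lagrangian_poly_remove)
  also have "lagrangian_poly p (Q - {x}) w = Z + w y * \<beta>"
    using lagrangian_poly_remove[of "Q - {x}" p w y] assms(1)
    by (simp add: Z_def \<beta>_def link_poly_Diff_nonadjacent[OF nonadj])
  finally have L: "lagrangian_poly p Q w = Z + w x * \<alpha> + w y * \<beta>" by simp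
  have Lx: "lagrangian_poly p (Q - {y}) (w(x := w x + w y)) = Z + (w x + w y) * \<alpha>"
    using lagrangian_poly_remove[of "Q - {y}" p "w(x := w x + w y)" x] assms(1,2)
      lagrangian_poly_cong[of "Q - {y} - {x}" "w(x := w x + w y)" w p]
      link_poly_cong[of "Q - {y}" x "w(x := w x + w y)" w p]
    by (simp add: Z_def \<alpha>_def Qxy link_poly_Diff_nonadjacent[OF nonadj'])
  have Ly: "lagrangian_poly p (Q - {x}) (w(y := w x + w y)) = Z + (w x + w y) * \<beta>"
    using lagrangian_poly_remove[of "Q - {x}" p "w(y := w x + w y)" y] assms(1,2)
      lagrangian_poly_cong[of "Q - {x} - {y}" "w(y := w x + w y)" w p]
      link_poly_cong[of "Q - {x}" y "w(y := w x + w y)" w p]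
    by (simp add: Z_def \<beta>_def link_poly_Diff_nonadjacent[OF nonadj])
  have "w x * \<alpha> + w y * \<beta> \<le> (w x + w y) * max \<alpha> \<beta>"
    using add_mono[OF mult_left_mono[OF max.cobounded1 w_nonneg[of x]]
        mult_left_mono[OF max.cobounded2 w_nonneg[of y]]]
    by (simp add: distrib_right)
  also have "\<dots> = max ((w x + w y) * \<alpha>) ((w x + w y) * \<beta>)"
    using w_nonneg[of x] w_nonneg[of y] by (simp add: max_mult_distrib_left)
  finally show ?thesis
    unfolding L Lx Ly by (simp flip: max_add_distrib_right)
qed

lemma sum_merge_weights:
  assumes "finite Q" "x \<in> Q" "y \<in> Q" "x \<noteq> y"
  shows "sum (w(x := w x + w y)) (Q - {y}) = sum w Q"
proof -
  have "sum (w(x := w x + w y)) (Q - {y}) = w x + w y + sum w (Q - {y} - {x})"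
    using assms by (simp add: sum.remove)
  also have "\<dots> = sum w Q"
    using assms by (simp add: sum.remove[of Q y] sum.remove[of "Q - {y}" x] algebra_simps)
  finally show ?thesis .
qed

lemma cubic_am_gm:
  fixes a t :: real
  assumes "0 \<le> a" "0 \<le> t"
  shows "27 * a * t^2 \<le> 4 * (a + t)^3"
proof -
  have "4 * (a + t)^3 - 27 * a * t^2 = (t - 2*a)^2 * (4*t + a)"
    by (simp add: power2_eq_square power3_eq_cube algebra_simps)
  also have "\<dots> \<ge> 0" using assms by simp
  finally show ?thesis by simp
qed

lemma K4_minus_poly_le:
  fixes a b c d :: real
  assumes "0 \<le> a" "0 \<le> b" "0 \<le> c" "0 \<le> d"
  shows "d * (a*b + a*c + b*c) \<le> 4/81 * (a + b + c + d)^3"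
proof -
  have "0 \<le> (a-b)^2 + (b-c)^2 + (c-a)^2" by simp
  then have "a*b + a*c + b*c \<le> (a+b+c)^2 / 3" by (simp add: power2_eq_square algebra_simps)
  then have "d * (a*b + a*c + b*c) \<le> d * ((a+b+c)^2 / 3)"
    by (rule mult_left_mono) (use assms in auto)
  also have "\<dots> \<le> 4/81 * (d + (a+b+c))^3" using cubic_am_gm[of d "a+b+c"] assms by simp
  finally show ?thesis by (simp add: algebra_simps)
qed

lemma three_subset_of_four:
  assumes "distinct [a, b, c, d]" "S \<subseteq> {a, b, c, d}" "card S = 3" "S \<noteq> {a, b, c}"
  shows "S \<in> {{a, b, d}, {a, c, d}, {b, c, d}}"
proof -
  have "card ({a, b, c, d} - S) = 1"
    using assms by (simp add: card_Diff_subset finite_subset)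
  then obtain e where e: "{a, b, c, d} - S = {e}" by (auto simp: card_1_singleton_iff)
  then have "S = {a, b, c, d} - {e}" "e \<in> {a, b, c, d}" using assms(2) by blast+
  then show ?thesis using assms(1,4) by auto
qed

lemma lagrangian_poly_le_card_le_4:
  assumes "finite Q" "card Q \<le> 4" and w_nonneg: "\<And>z. 0 \<le> w z"
    and no_K4: "card Q = 4 \<Longrightarrow> \<exists>S\<subseteq>Q. card S = 3 \<and> \<not> p S"
  shows "lagrangian_poly p Q w \<le> 4/81 * (sum w Q)^3"
proof -
  have prod_w_nonneg: "0 \<le> prod w S" for S by (simp add: prod_nonneg w_nonneg)
  consider "card Q < 3" | "card Q = 3" | "card Q = 4" using assms(2) by linarith
  then show ?thesis
  proof cases
    case 1
    then have "triples p Q = {}"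
      unfolding triples_def using card_mono[OF assms(1)]
      by (metis (mono_tags, lifting) empty_Collect_eq leD)
    then show ?thesis by (simp add: lagrangian_poly_def sum_nonneg w_nonneg)
  next
    case 2
    then obtain a b c where Q: "Q = {a, b, c}" "distinct [a, b, c]" by (auto simp: card_3_iff)
    have "triples p Q \<subseteq> {Q}"
      unfolding triples_def using 2 card_subset_eq[OF assms(1)] by auto
    then have "lagrangian_poly p Q w \<le> prod w Q"
      unfolding lagrangian_poly_def using sum_mono2[of "{Q}" "triples p Q" "prod w"] prod_w_nonneg
      by simp
    also have "\<dots> \<le> 4/81 * (sum w Q)^3"
      using K4_minus_poly_le[of "w a" "w b" 0 "w c"] w_nonneg Q by (simp add: algebra_simps)
    finally show ?thesis .
  next
    case 3
    obtain S0 where S0: "S0 \<subseteq> Q" "card S0 = 3" "\<not> p S0" using no_K4[OF 3] by blast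
    then obtain a b c where abc: "S0 = {a, b, c}" "distinct [a, b, c]" by (auto simp: card_3_iff)
    have "card (Q - S0) = 1" using S0 3 assms(1) by (simp add: card_Diff_subset finite_subset)
    then obtain d where "Q - S0 = {d}" by (auto simp: card_1_singleton_iff)
    then have Q: "Q = {a, b, c, d}" "distinct [a, b, c, d]" using S0(1) abc by auto
    have "triples p Q \<subseteq> {{a, b, d}, {a, c, d}, {b, c, d}}"
      unfolding triples_def using three_subset_of_four[OF Q(2)] Q(1) S0(3) abc(1) by auto
    then have "lagrangian_poly p Q w \<le> sum (prod w) {{a, b, d}, {a, c, d}, {b, c, d}}"
      unfolding lagrangian_poly_def by (intro sum_mono2) (simp_all add: prod_w_nonneg)
    also have "\<dots> \<le> prod w {a, b, d} + prod w {a, c, d} + prod w {b, c, d}"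
      by (simp add: sum.insert_if add_increasing prod_w_nonneg)
    also have "\<dots> = w d * (w a * w b + w a * w c + w b * w c)"
      using Q(2) by (simp add: algebra_simps)
    also have "\<dots> \<le> 4/81 * (sum w Q)^3"
      using K4_minus_poly_le[of "w a" "w b" "w c" "w d"] w_nonneg Q by (simp add: algebra_simps)
    finally show ?thesis .
  qed
qed

(* 4/81 is the Lagrangian of K4 minus an edge, attained at the weights 2/9, 2/9, 2/9, 1/3. *)
lemma lagrangian_poly_le:
  assumes "finite Q" "\<And>z. 0 \<le> w z"
    and small: "\<And>R. finite R \<Longrightarrow> covers_pairs p R \<Longrightarrow> card R \<le> 4"
    and no_K4: "\<And>R. card R = 4 \<Longrightarrow> \<exists>S\<subseteq>R. card S = 3 \<and> \<not> p S"
  shows "lagrangian_poly p Q w \<le> 4/81 * (sum w Q)^3"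
  using assms(1,2)
proof (induction "card Q" arbitrary: Q w rule: less_induct)
  case less
  show ?case
  proof (cases "covers_pairs p Q")
    case True
    show ?thesis
      using lagrangian_poly_le_card_le_4[OF less.prems(1) small[OF less.prems(1) True] less.prems(2)
        no_K4] .
  next
    case False
    then obtain x y where xy: "x \<in> Q" "y \<in> Q" "x \<noteq> y"
      and nonadj: "\<forall>S\<in>triples p Q. \<not> (x \<in> S \<and> y \<in> S)"
      unfolding covers_pairs_def by auto
    have IH: "lagrangian_poly p (Q - {u}) w' \<le> 4/81 * (sum w' (Q - {u}))^3"
      if "u \<in> Q" "\<And>z. 0 \<le> w' z" for u w'
      using less.hyps[OF card_Diff1_less[OF less.prems(1) \<open>u \<in> Q\<close>]] less.prems(1) that(2)
      by simp
    have "lagrangian_poly p Q w \<le>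
        max (lagrangian_poly p (Q - {y}) (w(x := w x + w y)))
            (lagrangian_poly p (Q - {x}) (w(y := w x + w y)))"
      using lagrangian_poly_merge_le[OF less.prems(1) xy(3) nonadj less.prems(2)] .
    also have "\<dots> \<le> 4/81 * (sum w Q)^3"
    proof (rule max.boundedI)
      have "0 \<le> (w(x := w x + w y)) z" "0 \<le> (w(y := w x + w y)) z" for z
        using less.prems(2) by (simp_all add: add_nonneg_nonneg)
      moreover have "sum (w(y := w x + w y)) (Q - {x}) = sum w Q"
        using sum_merge_weights[OF less.prems(1) xy(2,1) xy(3)[symmetric], of w]
        by (simp add: add.commute)
      ultimately show "lagrangian_poly p (Q - {y}) (w(x := w x + w y)) \<le> 4/81 * (sum w Q)^3"
        and "lagrangian_poly p (Q - {x}) (w(y := w x + w y)) \<le> 4/81 * (sum w Q)^3"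
        using IH[OF xy(2)] IH[OF xy(1)] sum_merge_weights[OF less.prems(1) xy] by metis+
    qed
    finally show ?thesis .
  qed
qed

section \<open>Gram determinants in the plane\<close>

lemma abs_prod3_diff_le:
  fixes x y z x' y' z' M \<eta> :: real
  assumes "\<bar>y\<bar> \<le> M" "\<bar>z\<bar> \<le> M" "\<bar>x'\<bar> \<le> M" "\<bar>y'\<bar> \<le> M"
    and "\<bar>x - x'\<bar> \<le> \<eta>" "\<bar>y - y'\<bar> \<le> \<eta>" "\<bar>z - z'\<bar> \<le> \<eta>"
  shows "\<bar>x*y*z - x'*y'*z'\<bar> \<le> 3*M^2*\<eta>"
proof -
  have "x*y*z - x'*y'*z' = (x-x')*y*z + x'*(y-y')*z + x'*y'*(z-z')"
    by (simp add: algebra_simps)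
  moreover have "\<bar>(x-x')*y*z\<bar> \<le> \<eta>*M*M" "\<bar>x'*(y-y')*z\<bar> \<le> M*\<eta>*M" "\<bar>x'*y'*(z-z')\<bar> \<le> M*M*\<eta>"
    unfolding abs_mult using assms by (intro mult_mono; force)+
  ultimately show ?thesis by (simp add: power2_eq_square algebra_simps)
qed

lemma abs_det3_diff_le:
  fixes A B :: "real^3^3"
  assumes "\<And>i j. \<bar>A$i$j\<bar> \<le> M" "\<And>i j. \<bar>B$i$j\<bar> \<le> M" "\<And>i j. \<bar>A$i$j - B$i$j\<bar> \<le> \<eta>"
  shows "\<bar>det A - det B\<bar> \<le> 18 * M^2 * \<eta>"
proof -
  have "\<bar>A$1$i*A$2$j*A$3$k - B$1$i*B$2$j*B$3$k\<bar> \<le> 3*M^2*\<eta>" for i j k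
    using assms by (intro abs_prod3_diff_le)
  from this[of 1 2 3] this[of 2 3 1] this[of 3 1 2] this[of 1 3 2] this[of 2 1 3] this[of 3 2 1]
  show ?thesis unfolding det_3 by (simp add: abs_le_iff algebra_simps)
qed

lemma det_inner_matrix_eq_0:
  fixes u w :: "real^2^3"
  shows "det (\<chi> i j. u$i \<bullet> w$j) = 0"
  unfolding det_3 inner_vec_def sum_2 by (simp add: algebra_simps)

lemma abs_det_le_if_inner_approx:
  fixes u w :: "real^2^3" and E :: "real^3^3"
  assumes approx: "\<And>i j. \<bar>u$i \<bullet> w$j - E$i$j\<bar> \<le> \<eta>" and bound: "\<And>i j. \<bar>E$i$j\<bar> \<le> M"
  shows "\<bar>det E\<bar> \<le> 18 * (M + \<eta>)^2 * \<eta>"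
proof -
  have "\<bar>u$i \<bullet> w$j\<bar> \<le> M + \<eta>" "\<bar>E$i$j\<bar> \<le> M + \<eta>" for i j
    using approx[of i j] bound[of i j] by linarith+
  then have "\<bar>det (\<chi> i j. u$i \<bullet> w$j) - det E\<bar> \<le> 18 * (M + \<eta>)^2 * \<eta>"
    using approx by (intro abs_det3_diff_le) simp_all
  then show ?thesis by (simp add: det_inner_matrix_eq_0)
qed

section \<open>Planar point sets with all distances close to 1 or sqrt 3\<close>

definition near_dist :: "real \<Rightarrow> point \<Rightarrow> point \<Rightarrow> bool" where
  "near_dist d x y \<longleftrightarrow> \<bar>dist x y - d\<bar> \<le> 1/20000"

definition near_1_or_sqrt3 :: "point \<Rightarrow> point \<Rightarrow> bool" where
  "near_1_or_sqrt3 x y \<longleftrightarrow> near_dist 1 x y \<or> near_dist (sqrt 3) x y"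

definition nominal_sq_dist :: "point \<Rightarrow> point \<Rightarrow> real" where
  "nominal_sq_dist x y = (if x = y then 0 else if near_dist 1 x y then 1 else 3)"

lemma sqrt3_bounds: "173/100 < sqrt (3::real)" "sqrt (3::real) < 174/100"
  by (rule real_less_rsqrt real_less_lsqrt; simp add: power2_eq_square)+

lemma near_dist_commute: "near_dist d x y = near_dist d y x"
  by (simp add: near_dist_def dist_commute)

lemma not_near_dist_1_and_sqrt3: "near_dist 1 x y \<Longrightarrow> \<not> near_dist (sqrt 3) x y"
  using sqrt3_bounds unfolding near_dist_def by linarith

lemma near_dist_scaleR:
  assumes "s > 0"
  shows "near_dist d (x /\<^sub>R s) (y /\<^sub>R s) \<longleftrightarrow> \<bar>dist x y - d * s\<bar> \<le> s / 20000"
proof -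
  have "dist (x /\<^sub>R s) (y /\<^sub>R s) = dist x y / s"
    using assms by (simp add: dist_norm divide_inverse flip: scaleR_diff_right)
  then have "dist (x /\<^sub>R s) (y /\<^sub>R s) - d = (dist x y - d * s) / s"
    using assms by (simp add: diff_divide_distrib)
  moreover have "\<bar>e / s\<bar> \<le> 1/20000 \<longleftrightarrow> \<bar>e\<bar> \<le> s / 20000" for e
    using assms by (simp add: pos_divide_le_eq)
  ultimately show ?thesis
    by (simp add: near_dist_def)
qed

lemma abs_power2_diff_le:
  fixes d c \<delta> :: real
  assumes "\<bar>d - c\<bar> \<le> \<delta>" "0 \<le> c"
  shows "\<bar>d^2 - c^2\<bar> \<le> \<delta> * (2 * c + \<delta>)"
proof -
  have "\<bar>d^2 - c^2\<bar> = \<bar>d - c\<bar> * \<bar>d + c\<bar>" by (simp add: power2_eq_square algebra_simps flip: abs_mult)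
  also have "\<dots> \<le> \<delta> * (2 * c + \<delta>)"
    using assms by (intro mult_mono) auto
  finally show ?thesis .
qed

lemma abs_sq_dist_minus_nominal_le:
  assumes "x = y \<or> near_1_or_sqrt3 x y"
  shows "\<bar>(dist x y)^2 - nominal_sq_dist x y\<bar> \<le> 1/5000"
proof -
  consider "x = y" | "x \<noteq> y" "near_dist 1 x y" | "x \<noteq> y" "near_dist (sqrt 3) x y" "\<not> near_dist 1 x y"
    using assms unfolding near_1_or_sqrt3_def by blast
  then show ?thesis
  proof cases
    case 2
    then show ?thesis
      using abs_power2_diff_le[of "dist x y" 1 "1/20000"]
      by (simp add: near_dist_def nominal_sq_dist_def)
  next
    case 3
    then show ?thesis
      using abs_power2_diff_le[of "dist x y" "sqrt 3" "1/20000"] sqrt3_bounds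
      by (simp add: near_dist_def nominal_sq_dist_def)
  qed (simp add: nominal_sq_dist_def)
qed

lemma inner_diff_eq_sq_dists:
  fixes a b c :: "'a::real_inner"
  shows "(b - a) \<bullet> (c - a) = ((dist a b)^2 + (dist a c)^2 - (dist b c)^2) / 2"
  unfolding dist_norm power2_norm_eq_inner
  by (simp add: inner_diff_left inner_diff_right inner_commute field_simps)

lemma inner_diff_approx:
  assumes "pairwise near_1_or_sqrt3 {a, b, c}"
  shows "\<bar>(b - a) \<bullet> (c - a) - (nominal_sq_dist a b + nominal_sq_dist a c - nominal_sq_dist b c) / 2\<bar>
    \<le> 3/10000"
proof -
  have "\<bar>(dist a b)^2 - nominal_sq_dist a b\<bar> \<le> 1/5000" "\<bar>(dist a c)^2 - nominal_sq_dist a c\<bar> \<le> 1/5000"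
    "\<bar>(dist b c)^2 - nominal_sq_dist b c\<bar> \<le> 1/5000"
    using assms unfolding pairwise_def by (intro abs_sq_dist_minus_nominal_le; blast)+
  then show ?thesis
    unfolding inner_diff_eq_sq_dists abs_le_iff by (auto simp: field_simps)
qed

(* The true Gram determinant vanishes, while the nominal one is a multiple of 1/8; the bound
   therefore forces the nominal determinant to be 0. *)
lemma abs_det_nominal_gram_le:
  fixes u w :: "point^3"
  assumes "pairwise near_1_or_sqrt3 X" "a \<in> X" "\<And>i. u$i \<in> X" "\<And>j. w$j \<in> X"
  shows "\<bar>det (\<chi> i j. (nominal_sq_dist a (u$i) + nominal_sq_dist a (w$j) - nominal_sq_dist (u$i) (w$j)) / 2)\<bar>
    \<le> 1/20"
proof -
  let ?E = "\<chi> i j. (nominal_sq_dist a (u$i) + nominal_sq_dist a (w$j) - nominal_sq_dist (u$i) (w$j)) / 2"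
  have "\<bar>(\<chi> i. u$i - a)$i \<bullet> (\<chi> j. w$j - a)$j - ?E$i$j\<bar> \<le> 3/10000" for i j
  proof -
    have "pairwise near_1_or_sqrt3 {a, u$i, w$j}"
      using assms by (auto intro: pairwise_subset)
    then show ?thesis using inner_diff_approx by simp
  qed
  moreover have "\<bar>?E$i$j\<bar> \<le> 3" for i j
    by (simp add: nominal_sq_dist_def)
  ultimately have "\<bar>det ?E\<bar> \<le> 18 * (3 + 3/10000)^2 * (3/10000)"
    by (rule abs_det_le_if_inner_approx)
  also have "\<dots> \<le> 1/20" by (simp add: power2_eq_square)
  finally show ?thesis .
qed

(* lij says that points i and j of four are at distance about 1 rather than sqrt 3.  Either exactly
   one pair is long (two unit equilateral triangles sharing an edge), or the long pairs form a
   triangle (the centre of an equilateral triangle of side sqrt 3 joined to its vertices). *)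
definition rhombus_or_star :: "bool \<Rightarrow> bool \<Rightarrow> bool \<Rightarrow> bool \<Rightarrow> bool \<Rightarrow> bool \<Rightarrow> bool" where
  "rhombus_or_star l01 l02 l03 l12 l13 l23 \<longleftrightarrow>
     (\<not> l01 \<and> l02 \<and> l03 \<and> l12 \<and> l13 \<and> l23) \<or> (l01 \<and> \<not> l02 \<and> l03 \<and> l12 \<and> l13 \<and> l23) \<or>
     (l01 \<and> l02 \<and> \<not> l03 \<and> l12 \<and> l13 \<and> l23) \<or> (l01 \<and> l02 \<and> l03 \<and> \<not> l12 \<and> l13 \<and> l23) \<or>
     (l01 \<and> l02 \<and> l03 \<and> l12 \<and> \<not> l13 \<and> l23) \<or> (l01 \<and> l02 \<and> l03 \<and> l12 \<and> l13 \<and> \<not> l23) \<or>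
     (l01 \<and> l02 \<and> l03 \<and> \<not> l12 \<and> \<not> l13 \<and> \<not> l23) \<or> (l01 \<and> l12 \<and> l13 \<and> \<not> l02 \<and> \<not> l03 \<and> \<not> l23) \<or>
     (l02 \<and> l12 \<and> l23 \<and> \<not> l01 \<and> \<not> l03 \<and> \<not> l13) \<or> (l03 \<and> l13 \<and> l23 \<and> \<not> l01 \<and> \<not> l02 \<and> \<not> l12)"

(* Gram determinant of p1 - p0, p2 - p0, p3 - p0 when dij = |pi - pj|^2. *)
definition gram_det :: "real \<Rightarrow> real \<Rightarrow> real \<Rightarrow> real \<Rightarrow> real \<Rightarrow> real \<Rightarrow> real" where
  "gram_det d01 d02 d03 d12 d13 d23 = det (vector [
     vector [d01, (d01 + d02 - d12) / 2, (d01 + d03 - d13) / 2],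
     vector [(d01 + d02 - d12) / 2, d02, (d02 + d03 - d23) / 2],
     vector [(d01 + d03 - d13) / 2, (d02 + d03 - d23) / 2, d03]] :: real^3^3)"

lemma rhombus_or_star_if_gram_det_small:
  assumes "\<bar>gram_det (if l01 then 1 else 3) (if l02 then 1 else 3) (if l03 then 1 else 3)
    (if l12 then 1 else 3) (if l13 then 1 else 3) (if l23 then 1 else 3)\<bar> \<le> 1/20"
  shows "rhombus_or_star l01 l02 l03 l12 l13 l23"
  using assms unfolding rhombus_or_star_def
  by (cases l01; cases l02; cases l03; cases l12; cases l13; cases l23)
    (simp_all add: gram_det_def det_3)

lemma vector_3_nth_in: "(vector [x, y, z] :: 'a::zero^3) $ i \<in> {x, y, z}"
  using exhaust_3[of i] by auto

lemma rhombus_or_star_if_pairwise_near: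
  assumes "pairwise near_1_or_sqrt3 {a, b, c, d}" "distinct [a, b, c, d]"
  shows "rhombus_or_star (near_dist 1 a b) (near_dist 1 a c) (near_dist 1 a d)
    (near_dist 1 b c) (near_dist 1 b d) (near_dist 1 c d)"
proof (rule rhombus_or_star_if_gram_det_small)
  let ?u = "vector [b, c, d] :: point^3"
  let ?E = "\<chi> i j. (nominal_sq_dist a (?u$i) + nominal_sq_dist a (?u$j) - nominal_sq_dist (?u$i) (?u$j)) / 2"
  have "\<bar>det ?E\<bar> \<le> 1/20"
    using vector_3_nth_in[of b c d] by (intro abs_det_nominal_gram_le[OF assms(1)]) auto
  moreover have "det ?E = gram_det (if near_dist 1 a b then 1 else 3) (if near_dist 1 a c then 1 else 3)
      (if near_dist 1 a d then 1 else 3) (if near_dist 1 b c then 1 else 3)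
      (if near_dist 1 b d then 1 else 3) (if near_dist 1 c d then 1 else 3)"
    using assms(2) by (simp add: det_3 gram_det_def nominal_sq_dist_def near_dist_commute) blast
  ultimately show "\<bar>gram_det (if near_dist 1 a b then 1 else 3) (if near_dist 1 a c then 1 else 3)
      (if near_dist 1 a d then 1 else 3) (if near_dist 1 b c then 1 else 3)
      (if near_dist 1 b d then 1 else 3) (if near_dist 1 c d then 1 else 3)\<bar> \<le> 1/20"
    by simp
qed

lemma no_three_common_unit_neighbours:
  assumes "pairwise near_1_or_sqrt3 {u, v, x, y, z}" "distinct [u, v, x, y, z]"
  shows "\<not> (near_dist 1 u v \<and> near_dist 1 u x \<and> near_dist 1 v x \<and> near_dist 1 u y \<and> near_dist 1 v y \<and>
    near_dist 1 u z \<and> near_dist 1 v z)"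
proof
  assume unit: "near_dist 1 u v \<and> near_dist 1 u x \<and> near_dist 1 v x \<and> near_dist 1 u y \<and> near_dist 1 v y \<and>
    near_dist 1 u z \<and> near_dist 1 v z"
  have "\<not> near_dist 1 x y" "\<not> near_dist 1 x z" "\<not> near_dist 1 y z"
    using rhombus_or_star_if_pairwise_near[of u v x y] rhombus_or_star_if_pairwise_near[of u v x z]
      rhombus_or_star_if_pairwise_near[of u v y z] assms(2) unit
      pairwise_subset[OF assms(1), of "{u, v, x, y}"] pairwise_subset[OF assms(1), of "{u, v, x, z}"]
      pairwise_subset[OF assms(1), of "{u, v, y, z}"]
    unfolding rhombus_or_star_def by auto
  let ?b = "vector [v, x, y] :: point^3" and ?c = "vector [v, x, z] :: point^3"
  let ?E = "\<chi> i j. (nominal_sq_dist u (?b$i) + nominal_sq_dist u (?c$j) - nominal_sq_dist (?b$i) (?c$j)) / 2"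
  have "\<bar>det ?E\<bar> \<le> 1/20"
    using vector_3_nth_in[of v x y] vector_3_nth_in[of v x z]
    by (intro abs_det_nominal_gram_le[OF assms(1)]) auto
  moreover have "det ?E = -9/8"
    using assms(2) unit \<open>\<not> near_dist 1 x y\<close> \<open>\<not> near_dist 1 x z\<close> \<open>\<not> near_dist 1 y z\<close>
    by (simp add: det_3 nominal_sq_dist_def near_dist_commute) blast
  ultimately show False by simp
qed

(* Double counting the short pairs over the five 4-subsets, r of which are rhombi, gives
   3 |E| = 15 + 2 r, so r = 0 or r = 3.  If r = 0, every vertex has degree 2, but a star has a
   vertex of degree 3.  If r = 3, the degrees are 2 and 4 and the short pairs form K_{2,3} plus
   the edge between its two vertices of degree 4, which the last ten hypotheses exclude. *)
lemma K5_labelling_impossible: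
  assumes "rhombus_or_star l01 l02 l03 l12 l13 l23"
    and "rhombus_or_star l01 l02 l04 l12 l14 l24"
    and "rhombus_or_star l01 l03 l04 l13 l14 l34"
    and "rhombus_or_star l02 l03 l04 l23 l24 l34"
    and "rhombus_or_star l12 l13 l14 l23 l24 l34"
    and "\<not> (l01 \<and> l02 \<and> l12 \<and> l03 \<and> l13 \<and> l04 \<and> l14)"
    and "\<not> (l02 \<and> l01 \<and> l12 \<and> l03 \<and> l23 \<and> l04 \<and> l24)"
    and "\<not> (l03 \<and> l01 \<and> l13 \<and> l02 \<and> l23 \<and> l04 \<and> l34)"
    and "\<not> (l04 \<and> l01 \<and> l14 \<and> l02 \<and> l24 \<and> l03 \<and> l34)"
    and "\<not> (l12 \<and> l01 \<and> l02 \<and> l13 \<and> l23 \<and> l14 \<and> l24)"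
    and "\<not> (l13 \<and> l01 \<and> l03 \<and> l12 \<and> l23 \<and> l14 \<and> l34)"
    and "\<not> (l14 \<and> l01 \<and> l04 \<and> l12 \<and> l24 \<and> l13 \<and> l34)"
    and "\<not> (l23 \<and> l02 \<and> l03 \<and> l12 \<and> l13 \<and> l24 \<and> l34)"
    and "\<not> (l24 \<and> l02 \<and> l04 \<and> l12 \<and> l14 \<and> l23 \<and> l34)"
    and "\<not> (l34 \<and> l03 \<and> l04 \<and> l13 \<and> l14 \<and> l23 \<and> l24)"
  shows False
  using assms unfolding rhombus_or_star_def
  by argo

lemma card_le_4_if_pairwise_near:
  assumes "finite Q" "pairwise near_1_or_sqrt3 Q"
  shows "card Q \<le> 4"
proof (rule ccontr)
  assume "\<not> card Q \<le> 4"
  then obtain P where "P \<subseteq> Q" "card P = 5"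
    using obtain_subset_with_card_n[of 5 Q] by auto
  then have "\<exists>p0 p1 p2 p3 p4. P = {p0, p1, p2, p3, p4} \<and> distinct [p0, p1, p2, p3, p4]"
    by (simp add: numeral_eq_Suc card_Suc_eq) blast
  then obtain p0 p1 p2 p3 p4
    where P: "P = {p0, p1, p2, p3, p4}" and distinct_p: "distinct [p0, p1, p2, p3, p4]"
    by blast
  have pw: "pairwise near_1_or_sqrt3 S" if "S \<subseteq> P" for S
    using pairwise_subset[OF assms(2)] that \<open>P \<subseteq> Q\<close> by blast
  have sym: "near_dist 1 p1 p0 = near_dist 1 p0 p1" "near_dist 1 p2 p0 = near_dist 1 p0 p2"
    "near_dist 1 p3 p0 = near_dist 1 p0 p3" "near_dist 1 p4 p0 = near_dist 1 p0 p4"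
    "near_dist 1 p2 p1 = near_dist 1 p1 p2" "near_dist 1 p3 p1 = near_dist 1 p1 p3"
    "near_dist 1 p4 p1 = near_dist 1 p1 p4" "near_dist 1 p3 p2 = near_dist 1 p2 p3"
    "near_dist 1 p4 p2 = near_dist 1 p2 p4" "near_dist 1 p4 p3 = near_dist 1 p3 p4"
    by (simp_all add: near_dist_commute)
  note rhombus = rhombus_or_star_if_pairwise_near[OF pw]
  note no_K23 = no_three_common_unit_neighbours[OF pw]
  show False
    by (rule K5_labelling_impossible[OF
        rhombus[of p0 p1 p2 p3] rhombus[of p0 p1 p2 p4] rhombus[of p0 p1 p3 p4]
        rhombus[of p0 p2 p3 p4] rhombus[of p1 p2 p3 p4]
        no_K23[of p0 p1 p2 p3 p4, unfolded sym] no_K23[of p0 p2 p1 p3 p4, unfolded sym]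
        no_K23[of p0 p3 p1 p2 p4, unfolded sym] no_K23[of p0 p4 p1 p2 p3, unfolded sym]
        no_K23[of p1 p2 p0 p3 p4, unfolded sym] no_K23[of p1 p3 p0 p2 p4, unfolded sym]
        no_K23[of p1 p4 p0 p2 p3, unfolded sym] no_K23[of p2 p3 p0 p1 p4, unfolded sym]
        no_K23[of p2 p4 p0 p1 p3, unfolded sym] no_K23[of p3 p4 p0 p1 p2, unfolded sym]])
      (use P distinct_p in auto)
qed

section \<open>Near copies of the triangle with sides 1, 1, sqrt 3\<close>

definition near_triangle :: "point set \<Rightarrow> bool" where
  "near_triangle S \<longleftrightarrow>
     (\<exists>x y z. S = {x, y, z} \<and> near_dist 1 x y \<and> near_dist 1 x z \<and> near_dist (sqrt 3) y z)"

lemma near_1_or_sqrt3_if_near_triangle: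
  assumes "near_triangle S" "x \<in> S" "y \<in> S" "x \<noteq> y"
  shows "near_1_or_sqrt3 x y"
  using assms unfolding near_triangle_def near_1_or_sqrt3_def
  by (auto simp: near_dist_commute[of _ x])

lemma near_triangle_two_unit_sides:
  assumes "near_triangle {a, b, c}" "distinct [a, b, c]"
  shows "(near_dist 1 a b \<and> near_dist 1 a c \<and> \<not> near_dist 1 b c) \<or>
    (near_dist 1 a b \<and> \<not> near_dist 1 a c \<and> near_dist 1 b c) \<or>
    (\<not> near_dist 1 a b \<and> near_dist 1 a c \<and> near_dist 1 b c)"
proof -
  obtain x y z where xyz: "{a, b, c} = {x, y, z}" "near_dist 1 x y" "near_dist 1 x z"
    "near_dist (sqrt 3) y z"
    using assms(1) unfolding near_triangle_def by blast
  then have "\<not> near_dist 1 y z" "x \<noteq> y" "x \<noteq> z" "y \<noteq> z"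
    using not_near_dist_1_and_sqrt3 sqrt3_bounds by (auto simp: near_dist_def)
  moreover have "x \<in> {a, b, c}" "y \<in> {a, b, c}" "z \<in> {a, b, c}"
    using xyz(1) by blast+
  ultimately show ?thesis
    using xyz(2,3) assms(2) near_dist_commute[of 1 b a] near_dist_commute[of 1 c a]
      near_dist_commute[of 1 c b]
    by auto
qed

lemma no_four_points_all_near_triangles:
  assumes "distinct [a, b, c, d]" "near_triangle {a, b, c}" "near_triangle {a, b, d}"
    "near_triangle {a, c, d}" "near_triangle {b, c, d}"
  shows False
proof -
  have "pairwise near_1_or_sqrt3 {a, b, c, d}"
    unfolding pairwise_def using assms(2-5) by (blast intro: near_1_or_sqrt3_if_near_triangle)
  moreover have "distinct [a, b, c]" "distinct [a, b, d]" "distinct [a, c, d]" "distinct [b, c, d]"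
    using assms(1) by auto
  ultimately show False
    using rhombus_or_star_if_pairwise_near[OF _ assms(1)] near_triangle_two_unit_sides assms(2-5)
    unfolding rhombus_or_star_def by blast
qed

lemma lagrangian_poly_near_triangle_le:
  assumes "s > 0" "finite Q" "\<And>z. 0 \<le> w z"
  shows "lagrangian_poly (\<lambda>S. near_triangle ((\<lambda>x. x /\<^sub>R s) ` S)) Q w \<le> 4/81 * (sum w Q)^3"
proof (rule lagrangian_poly_le[OF assms(2,3)])
  let ?f = "\<lambda>x::point. x /\<^sub>R s"
  let ?p = "\<lambda>S. near_triangle (?f ` S)"
  have inj: "inj ?f"
    using assms(1) by (auto intro: injI)
  show "card R \<le> 4" if fin: "finite R" and cov: "covers_pairs ?p R" for R
  proof -
    have "pairwise near_1_or_sqrt3 (?f ` R)"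
    proof (rule pairwiseI)
      fix x' y' assume "x' \<in> ?f ` R" "y' \<in> ?f ` R" "x' \<noteq> y'"
      then obtain x y where "x \<in> R" "y \<in> R" "x \<noteq> y" "x' = ?f x" "y' = ?f y" by auto
      then obtain S where "S \<in> triples ?p R" "x \<in> S" "y \<in> S"
        using cov unfolding covers_pairs_def by blast
      then show "near_1_or_sqrt3 x' y'"
        using near_1_or_sqrt3_if_near_triangle \<open>x' \<noteq> y'\<close> \<open>x' = ?f x\<close> \<open>y' = ?f y\<close>
        unfolding triples_def by blast
    qed
    then have "card (?f ` R) \<le> 4"
      using card_le_4_if_pairwise_near fin by blast
    then show ?thesis
      using card_image[OF inj_on_subset[OF inj subset_UNIV]] by simp
  qed
  show "\<exists>S\<subseteq>R. card S = 3 \<and> \<not> ?p S" if "card R = 4" for R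
  proof (rule ccontr)
    assume all: "\<not> (\<exists>S\<subseteq>R. card S = 3 \<and> \<not> ?p S)"
    have "\<exists>a b c d. R = {a, b, c, d} \<and> distinct [a, b, c, d]"
      using that by (simp add: numeral_eq_Suc card_Suc_eq) blast
    then obtain a b c d where R: "R = {a, b, c, d}" "distinct [a, b, c, d]"
      by blast
    have triple: "?p S" if "S \<subseteq> R" "card S = 3" for S
      using all that by blast
    have "?p {a, b, c}" "?p {a, b, d}" "?p {a, c, d}" "?p {b, c, d}"
      using triple[of "{a, b, c}"] triple[of "{a, b, d}"] triple[of "{a, c, d}"] triple[of "{b, c, d}"] R
      by auto
    moreover have "distinct [?f a, ?f b, ?f c, ?f d]"
      using R(2) assms(1) by simp
    ultimately show False
      using no_four_points_all_near_triangles[of "?f a" "?f b" "?f c" "?f d"] by simp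
  qed
qed

section \<open>The triangle of type (120, 30, 30)\<close>

lemma mset3_eq_aab_cases:
  "{#x, y, z#} = {#a, a, b#} \<Longrightarrow>
    (x = a \<and> y = a \<and> z = b) \<or> (x = a \<and> y = b \<and> z = a) \<or> (x = b \<and> y = a \<and> z = a)"
  by (auto simp: add_eq_conv_ex)

lemma inner_eq_cos_angle_deg:
  assumes "A \<noteq> B" "A \<noteq> C"
  shows "(B - A) \<bullet> (C - A) = cos (angle_deg A B C * pi / 180) * (dist A B * dist A C)"
proof -
  define q where "q = ((B - A) \<bullet> (C - A)) / (norm (B - A) * norm (C - A))"
  have pos: "norm (B - A) * norm (C - A) > 0" using assms by auto
  have "\<bar>(B - A) \<bullet> (C - A)\<bar> \<le> norm (B - A) * norm (C - A)" by (rule Cauchy_Schwarz_ineq2)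
  then have "-1 \<le> q" "q \<le> 1" unfolding q_def using pos by (auto simp: abs_le_iff divide_le_eq le_divide_eq)
  then have "cos (angle_deg A B C * pi / 180) = q"
    by (simp add: angle_deg_def q_def)
  then show ?thesis
    unfolding q_def using pos by (simp add: dist_norm norm_minus_commute)
qed

lemma sides_of_120_30_triangle:
  assumes "A \<noteq> B" "A \<noteq> C" "B \<noteq> C" "angle_deg A B C = 120" "angle_deg B C A = 30"
  shows "dist A C = dist A B \<and> dist B C = sqrt 3 * dist A B"
proof -
  define a b c where "a = dist B C" and "b = dist A C" and "c = dist A B"
  have pos: "a > 0" "b > 0" "c > 0" using assms(1-3) by (simp_all add: a_def b_def c_def)
  have "cos (120 * pi / 180) = - 1/2" "cos (30 * pi / 180) = sqrt 3 / 2"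
    using cos_120 cos_30 by (simp_all add: field_simps)
  then have "(B - A) \<bullet> (C - A) = - (b * c) / 2" "(C - B) \<bullet> (A - B) = sqrt 3 / 2 * a * c"
    using inner_eq_cos_angle_deg[of A B C] inner_eq_cos_angle_deg[of B C A] assms
    by (simp_all add: a_def b_def c_def dist_commute)
  moreover have "(B - A) \<bullet> (C - A) = (c^2 + b^2 - a^2) / 2" "(C - B) \<bullet> (A - B) = (a^2 + c^2 - b^2) / 2"
    using inner_diff_eq_sq_dists[where a = A and b = B and c = C]
      inner_diff_eq_sq_dists[where a = B and b = C and c = A]
    by (simp_all add: a_def b_def c_def dist_commute)
  ultimately have law_A: "a^2 = b^2 + c^2 + b * c" and law_B: "a^2 + c^2 - b^2 = sqrt 3 * a * c"
    by (simp_all add: field_simps)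
  have "c * (2 * c + b) = c * (sqrt 3 * a)"
    using law_A law_B by (simp add: power2_eq_square algebra_simps)
  then have "sqrt 3 * a = 2 * c + b" using pos by simp
  then have "3 * a^2 = (2 * c + b)^2"
    by (metis power_mult_distrib real_sqrt_pow2 zero_le_numeral)
  then have "(c - b) * (c + 2 * b) = 0"
    using law_A by (simp add: power2_eq_square algebra_simps)
  then have "b = c" using pos by simp
  moreover have "a = sqrt (3 * c^2)"
    using law_A \<open>b = c\<close> pos by (intro real_sqrt_unique[symmetric]) (auto simp: power2_eq_square)
  then have "a = sqrt 3 * c"
    using pos by (simp add: real_sqrt_mult)
  ultimately show ?thesis by (simp add: a_def b_def c_def)
qed

lemma tri_type_120_30_30_side_lengths:
  assumes "tri_type (A, B, C) 120 30 30"
  obtains s where "s > 0" "{#dist A B, dist B C, dist C A#} = {#s, s, sqrt 3 * s#}"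
proof -
  have nc: "\<not> collinear {A, B, C}"
    and angles: "{#angle_deg A B C, angle_deg B C A, angle_deg C A B#} = {#30, 30, 120#}"
    using assms unfolding tri_type_def by (auto simp: add_mset_commute)
  have ne: "A \<noteq> B" "B \<noteq> C" "C \<noteq> A"
    using nc by (auto simp: insert_commute)
  consider "angle_deg A B C = 120" "angle_deg B C A = 30"
    | "angle_deg B C A = 120" "angle_deg C A B = 30"
    | "angle_deg C A B = 120" "angle_deg A B C = 30"
    using mset3_eq_aab_cases[OF angles] by auto
  then show ?thesis
  proof cases
    case 1
    with sides_of_120_30_triangle[of A B C] ne show ?thesis
      by (intro that[of "dist A B"]) (auto simp: dist_commute add_mset_commute)
  next
    case 2
    with sides_of_120_30_triangle[of B C A] ne show ?thesis
      by (intro that[of "dist B C"]) (auto simp: dist_commute add_mset_commute)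
  next
    case 3
    with sides_of_120_30_triangle[of C A B] ne show ?thesis
      by (intro that[of "dist C A"]) (auto simp: dist_commute add_mset_commute)
  qed
qed

lemma min_side_eq:
  assumes "s > 0" "{#dist A B, dist B C, dist C A#} = {#s, s, sqrt 3 * s#}"
  shows "min_side (A, B, C) = s"
proof -
  have "s \<le> sqrt 3 * s" using assms(1) sqrt3_bounds by simp
  then show ?thesis
    using mset3_eq_aab_cases[OF assms(2)] by (auto simp: min_side_def dist_commute)
qed

lemma near_triangle_if_sides_close:
  assumes "s > 0" "{#a, b, c#} = {#s, s, sqrt 3 * s#}"
    and "\<bar>dist A B - a\<bar> \<le> s / 20000" "\<bar>dist B C - b\<bar> \<le> s / 20000" "\<bar>dist C A - c\<bar> \<le> s / 20000"
  shows "near_triangle ((\<lambda>x. x /\<^sub>R s) ` {A, B, C})"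
proof -
  let ?f = "\<lambda>x::point. x /\<^sub>R s"
  have witness: "near_triangle {?f x, ?f y, ?f z}"
    if "\<bar>dist x y - s\<bar> \<le> s / 20000" "\<bar>dist x z - s\<bar> \<le> s / 20000"
      "\<bar>dist y z - sqrt 3 * s\<bar> \<le> s / 20000" for x y z
  proof -
    have "near_dist 1 (?f x) (?f y)" "near_dist 1 (?f x) (?f z)" "near_dist (sqrt 3) (?f y) (?f z)"
      using that by (simp_all add: near_dist_scaleR[OF assms(1)])
    then show ?thesis unfolding near_triangle_def by blast
  qed
  consider "a = s" "b = s" "c = sqrt 3 * s" | "a = s" "b = sqrt 3 * s" "c = s"
    | "a = sqrt 3 * s" "b = s" "c = s"
    using mset3_eq_aab_cases[OF assms(2)] by blast
  then show ?thesis
  proof cases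
    case 1
    then show ?thesis using witness[of B A C] assms(3-5) by (simp add: dist_commute insert_commute)
  next
    case 2
    then show ?thesis using witness[of A B C] assms(3-5) by (simp add: dist_commute insert_commute)
  next
    case 3
    then show ?thesis using witness[of C A B] assms(3-5) by (simp add: dist_commute insert_commute)
  qed
qed

lemma abs_dist_diff_dist_le: "\<bar>dist a' b' - dist a b\<bar> \<le> dist a' a + dist b' b"
  using dist_triangle[of a' b' a] dist_triangle[of a b' b] dist_triangle[of a b a'] dist_triangle[of a' b b']
  by (simp add: abs_le_iff dist_commute)

lemma eps_congruent_sides_close:
  assumes "eps_congruent \<epsilon> A' B' C' (A, B, C)"
  shows "\<bar>dist A' B' - dist A B\<bar> \<le> 2 * \<epsilon> * min_side (A, B, C)"
    "\<bar>dist B' C' - dist B C\<bar> \<le> 2 * \<epsilon> * min_side (A, B, C)"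
    "\<bar>dist C' A' - dist C A\<bar> \<le> 2 * \<epsilon> * min_side (A, B, C)"
proof -
  obtain A1 B1 C1 where "congruent_to A1 B1 C1 (A, B, C)"
    and close: "dist A' A1 \<le> \<epsilon> * min_side (A, B, C)" "dist B' B1 \<le> \<epsilon> * min_side (A, B, C)"
      "dist C' C1 \<le> \<epsilon> * min_side (A, B, C)"
    using assms unfolding eps_congruent_def by blast
  then have "dist A1 B1 = dist A B" "dist B1 C1 = dist B C" "dist C1 A1 = dist C A"
    unfolding congruent_to_def by auto
  then show "\<bar>dist A' B' - dist A B\<bar> \<le> 2 * \<epsilon> * min_side (A, B, C)"
    "\<bar>dist B' C' - dist B C\<bar> \<le> 2 * \<epsilon> * min_side (A, B, C)"
    "\<bar>dist C' A' - dist C A\<bar> \<le> 2 * \<epsilon> * min_side (A, B, C)"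
    using abs_dist_diff_dist_le[of A' B' A1 B1] abs_dist_diff_dist_le[of B' C' B1 C1]
      abs_dist_diff_dist_le[of C' A' C1 A1] close
    by linarith+
qed

lemma count_eps_le_if_tri_type_120_30_30:
  assumes "tri_type T 120 30 30" "finite P"
  shows "real (count_eps T (1/40000) P) \<le> 4/81 * real (card P)^3"
proof -
  obtain A B C where T: "T = (A, B, C)" by (cases T)
  obtain s where s: "s > 0" "{#dist A B, dist B C, dist C A#} = {#s, s, sqrt 3 * s#}"
    using tri_type_120_30_30_side_lengths assms(1) T by blast
  let ?p = "\<lambda>S. near_triangle ((\<lambda>x. x /\<^sub>R s) ` S)"
  have "?p {A', B', C'}" if "eps_congruent (1/40000) A' B' C' T" for A' B' C'
    using near_triangle_if_sides_close[OF s] eps_congruent_sides_close[OF that[unfolded T]]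
    by (simp add: min_side_eq[OF s])
  then have "count_eps T (1/40000) P \<le> card (triples ?p P)"
    unfolding count_eps_def triples_def
    by (intro card_mono finite_triples[OF assms(2), unfolded triples_def]) blast
  then have "real (count_eps T (1/40000) P) \<le> lagrangian_poly ?p P (\<lambda>_. 1)"
    by (simp flip: card_triples_eq_lagrangian_poly)
  also have "\<dots> \<le> 4/81 * real (card P)^3"
    using lagrangian_poly_near_triangle_le[OF s(1) assms(2), of "\<lambda>_. 1"] by simp
  finally show ?thesis .
qed

lemma h_le_if_count_eps_le:
  assumes "\<epsilon> > 0" and count: "\<And>P. finite P \<Longrightarrow> card P = n \<Longrightarrow> real (count_eps T \<epsilon> P) \<le> B"
  shows "real (h n T) \<le> B"
proof -
  define Y where "Y = {count_eps T \<epsilon> P | P. finite P \<and> card P = n}"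
  have "infinite (UNIV :: point set)"
    by (rule infinite_UNIV_vec) (rule infinite_UNIV_char_0)
  then obtain P0 :: "point set" where "finite P0" "card P0 = n"
    using infinite_arbitrarily_large by blast
  then have "Y \<noteq> {}" unfolding Y_def by blast
  have Y_le: "real k \<le> B" if "k \<in> Y" for k
    using that count unfolding Y_def by blast
  have "Y \<subseteq> {..nat \<lceil>B\<rceil>}"
  proof
    fix k assume "k \<in> Y"
    then have "real k \<le> B" by (rule Y_le)
    then have "real k \<le> real (nat \<lceil>B\<rceil>)" by linarith
    then show "k \<in> {..nat \<lceil>B\<rceil>}" by simp
  qed
  then have "finite Y" by (rule finite_subset) simp
  have "h n T \<le> h_eps n T \<epsilon>"
    unfolding h_def using assms(1) by (intro cInf_lower) auto
  also have "h_eps n T \<epsilon> = Max Y"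
    by (simp add: h_eps_def Y_def)
  finally show ?thesis
    using Y_le[OF Max_in[OF \<open>finite Y\<close> \<open>Y \<noteq> {}\<close>]] by linarith
qed

theorem lemma3p5:
  fixes T :: triangle and n :: nat
  assumes "tri_type T 120 30 30"
    and "n > 0"
  shows "real (h n T) \<le> 4 / 81 * real n ^ 3"
  using count_eps_le_if_tri_type_120_30_30[OF assms(1)]
  by (intro h_le_if_count_eps_le[of "1/40000"]) auto

end
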